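(* Let $f:\mathbb H\to\mathbb C$ be polar-analytic on $\mathbb H$ and let $(r_1,\theta_1),(r_2,\theta_2)\in\mathbb H$. Then the line integral $$\int_\gamma f(r,\theta)\,e^{i\theta}\,(dr+ir\,d\theta)$$ has the same value for every regular curve $\gamma$ in $\mathbb H$ starting at $(r_1,\theta_1)$ and ending at $(r_2,\theta_2)$. In particular, this integral vanishes for every closed regular curve $\gamma$ in $\mathbb H$.
   Context: $\mathbb H:=\{(r,\theta): r>0,\ \theta\in\mathbb R\}$. A function $f:\mathbb H\to\mathbb C$ is called polar-analytic on $\mathbb H$ if for every $(r_0,\theta_0)\in\mathbb H$ the limit $$(D_{\rm pol}f)(r_0,\theta_0):=\lim_{(r,\theta)\to(r_0,\theta_0)}\frac{f(r,\theta)-f(r_0,\theta_0)}{re^{i\theta}-r_0e^{i\theta_0}}$$ exists (with $re^{i\theta}\neq r_0e^{i\theta_0}$), independently of how $(r,\theta)$ approaches $(r_0,\theta_0)$ within $\mathbb H$. A regular curve is a piecewise continuously differentiable curve $\gamma:[a,b]\to\mathbb H$, $t\mapsto(r(t),\theta(t))$, and the line integral means $\int_a^b f(r(t),\theta(t))e^{i\theta(t)}\big(r'(t)+ir(t)\theta'(t)\big)\,dt$. *)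

theory Defs
  imports "HOL-Analysis.Analysis"
begin

definition Hpl :: "(real \<times> real) set" where
  "Hpl = {p. fst p > 0}"

definition pol :: "real \<times> real \<Rightarrow> complex" where
  "pol p = complex_of_real (fst p) * cis (snd p)"

definition polar_analytic :: "(real \<times> real \<Rightarrow> complex) \<Rightarrow> bool" where
  "polar_analytic f \<longleftrightarrow>
     (\<forall>p0\<in>Hpl. \<exists>D. ((\<lambda>p. (f p - f p0) / (pol p - pol p0)) \<longlongrightarrow> D)
                     (at p0 within {p \<in> Hpl. pol p \<noteq> pol p0}))"

definition regular_curve :: "(real \<Rightarrow> real \<times> real) \<Rightarrow> real \<Rightarrow> real \<Rightarrow> bool" where
  "regular_curve \<gamma> a b \<longleftrightarrow>
     a \<le> b \<and> \<gamma> piecewise_C1_differentiable_on {a..b} \<and> \<gamma> ` {a..b} \<subseteq> Hpl"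

definition polar_integrand ::
  "(real \<times> real \<Rightarrow> complex) \<Rightarrow> (real \<Rightarrow> real \<times> real) \<Rightarrow> real \<Rightarrow> complex" where
  "polar_integrand f \<gamma> t =
     f (\<gamma> t) * cis (snd (\<gamma> t)) *
     (complex_of_real (fst (vector_derivative \<gamma> (at t)))
      + \<i> * complex_of_real (fst (\<gamma> t)) * complex_of_real (snd (vector_derivative \<gamma> (at t))))"

end

theory Submission imports Defs "HOL-Complex_Analysis.Complex_Analysis" begin

text \<open>In logarithmic coordinates \<open>w = ln r + i\<theta>\<close> one has \<open>r e^(i\<theta>) = e^w\<close>, so a
  polar-analytic \<open>f\<close> becomes the entire function \<open>F(w) = f(e^(Re w), Im w)\<close>, and along
  the lifted curve \<open>w(t) = ln r(t) + i\<theta>(t)\<close> the polar integrand is \<open>F(w) e^w w'\<close>.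
  Hence if \<open>G\<close> is a primitive of the entire function \<open>F(w) e^w\<close>, every such integral
  equals \<open>G(w(b)) - G(w(a))\<close>, which depends only on the endpoints.\<close>

definition exp_polar :: "complex \<Rightarrow> real \<times> real" where
  "exp_polar w = (exp (Re w), Im w)"

definition log_polar :: "real \<times> real \<Rightarrow> complex" where
  "log_polar p = of_real (ln (fst p)) + \<i> * of_real (snd p)"

lemma pol_exp_polar: "pol (exp_polar w) = exp w"
  by (simp add: pol_def exp_polar_def exp_eq_polar)

lemma exp_polar_in_Hpl: "exp_polar w \<in> Hpl"
  by (simp add: exp_polar_def Hpl_def)

lemma exp_polar_log_polar: "p \<in> Hpl \<Longrightarrow> exp_polar (log_polar p) = p"
  by (simp add: exp_polar_def log_polar_def Hpl_def)

lemma polar_analytic_field_differentiable: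
  assumes "polar_analytic f"
  shows "(\<lambda>w. f (exp_polar w)) field_differentiable at w0"
proof -
  define p0 where "p0 = exp_polar w0"
  define S where "S = {p \<in> Hpl. pol p \<noteq> pol p0}"
  obtain D where D: "((\<lambda>p. (f p - f p0) / (pol p - pol p0)) \<longlongrightarrow> D) (at p0 within S)"
    using assms exp_polar_in_Hpl unfolding polar_analytic_def S_def p0_def by blast
  have exp_ne: "\<forall>\<^sub>F w in at w0. exp w \<noteq> exp w0"
    using eventually_at_ball'[OF pi_gt_zero, of w0 UNIV]
    by eventually_elim (use inj_on_exp_pi[of w0] in \<open>auto simp: inj_on_def\<close>)
  have "(exp_polar \<longlongrightarrow> p0) (at w0)"
    unfolding exp_polar_def p0_def by (intro tendsto_intros)
  moreover have "\<forall>\<^sub>F w in at w0. exp_polar w \<in> S \<and> exp_polar w \<noteq> p0"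
    using exp_ne by eventually_elim
                    (auto simp: S_def exp_polar_in_Hpl pol_exp_polar p0_def dest: arg_cong[where f = pol])
  ultimately have "filterlim exp_polar (at p0 within S) (at w0)"
    by (simp add: filterlim_at)
  from filterlim_compose[OF D this]
  have quot: "((\<lambda>w. (f (exp_polar w) - f p0) / (exp w - exp w0)) \<longlongrightarrow> D) (at w0)"
    by (simp add: pol_exp_polar p0_def)
  have "((\<lambda>w. (exp w - exp w0) / (w - w0)) \<longlongrightarrow> exp w0) (at w0)"
    using DERIV_exp[of w0] by (simp add: has_field_derivative_iff)
  with quot have "((\<lambda>w. (f (exp_polar w) - f p0) / (exp w - exp w0) * ((exp w - exp w0) / (w - w0)))
                    \<longlongrightarrow> D * exp w0) (at w0)"
    by (intro tendsto_mult)
  then have "((\<lambda>w. (f (exp_polar w) - f (exp_polar w0)) / (w - w0)) \<longlongrightarrow> D * exp w0) (at w0)"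
    by (rule Lim_transform_eventually)
       (use exp_ne in \<open>eventually_elim, simp add: p0_def\<close>)
  then show ?thesis
    unfolding field_differentiable_def has_field_derivative_iff by blast
qed

lemma polar_analytic_primitive:
  assumes "polar_analytic f"
  obtains G where "\<And>w. (G has_field_derivative f (exp_polar w) * exp w) (at w)"
proof -
  have "(\<lambda>w. f (exp_polar w)) holomorphic_on UNIV"
    using polar_analytic_field_differentiable[OF assms]
    by (simp add: holomorphic_on_def field_differentiable_at_within)
  then have "(\<lambda>w. f (exp_polar w) * exp w) holomorphic_on UNIV"
    by (intro holomorphic_on_mult holomorphic_on_exp) auto
  from holomorphic_convex_primitive'[OF convex_UNIV open_UNIV this] that show ?thesis
    by auto
qed

lemma log_polar_has_vector_derivative:
  assumes "(\<gamma> has_vector_derivative V) (at t)" and "fst (\<gamma> t) > 0"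
  shows "((\<lambda>t. log_polar (\<gamma> t)) has_vector_derivative
           of_real (fst V / fst (\<gamma> t)) + \<i> * of_real (snd V)) (at t)"
proof -
  have r: "((\<lambda>t. fst (\<gamma> t)) has_real_derivative fst V) (at t)"
    and \<theta>: "((\<lambda>t. snd (\<gamma> t)) has_real_derivative snd V) (at t)"
    using bounded_linear.has_vector_derivative[OF bounded_linear_fst assms(1)]
          bounded_linear.has_vector_derivative[OF bounded_linear_snd assms(1)]
    by (simp_all add: has_real_derivative_iff_has_vector_derivative)
  have "((\<lambda>t. ln (fst (\<gamma> t))) has_real_derivative fst V / fst (\<gamma> t)) (at t)"
    using DERIV_chain2[OF DERIV_ln_divide[OF assms(2)] r] by simp
  then show ?thesis
    unfolding log_polar_def by (intro derivative_intros has_vector_derivative_of_real \<theta>)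
qed

lemma has_integral_polar_integrand:
  assumes G: "\<And>w. (G has_field_derivative f (exp_polar w) * exp w) (at w)"
    and "regular_curve \<gamma> a b"
  shows "(polar_integrand f \<gamma> has_integral G (log_polar (\<gamma> b)) - G (log_polar (\<gamma> a))) {a..b}"
proof -
  have ab: "a \<le> b" and pw: "\<gamma> piecewise_C1_differentiable_on {a..b}"
    and in_Hpl: "\<And>t. t \<in> {a..b} \<Longrightarrow> \<gamma> t \<in> Hpl"
    using assms(2) by (auto simp: regular_curve_def)
  obtain s where "finite s" and C1: "\<gamma> C1_differentiable_on {a..b} - s"
    using pw by (auto simp: piecewise_C1_differentiable_on_def)
  have "continuous_on {a..b} (\<lambda>t. log_polar (\<gamma> t))"
    using pw in_Hpl unfolding log_polar_def
    by (intro continuous_intros continuous_on_fst continuous_on_snd)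
       (force simp: piecewise_C1_differentiable_on_def Hpl_def)+
  moreover have "continuous_on UNIV G"
    using G by (meson DERIV_isCont continuous_at_imp_continuous_on)
  ultimately have cont: "continuous_on {a..b} (\<lambda>t. G (log_polar (\<gamma> t)))"
    by (metis continuous_on_compose2 subset_UNIV)
  have "((\<lambda>t. G (log_polar (\<gamma> t))) has_vector_derivative polar_integrand f \<gamma> t) (at t)"
    if t: "t \<in> {a<..<b} - s" for t
  proof -
    define V where "V = vector_derivative \<gamma> (at t)"
    have "(\<gamma> has_vector_derivative V) (at t)"
      using C1 t by (auto simp: C1_differentiable_on_eq vector_derivative_works V_def)
    moreover have Hpl: "\<gamma> t \<in> Hpl"
      using in_Hpl t by auto
    ultimately have "((\<lambda>t. G (log_polar (\<gamma> t))) has_vector_derivative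
        (of_real (fst V / fst (\<gamma> t)) + \<i> * of_real (snd V)) * (f (\<gamma> t) * exp (log_polar (\<gamma> t))))
        (at t)"
      using field_vector_diff_chain_at[OF log_polar_has_vector_derivative G]
      by (simp add: o_def exp_polar_log_polar Hpl_def)
    moreover have "exp (log_polar (\<gamma> t)) = of_real (fst (\<gamma> t)) * cis (snd (\<gamma> t))"
      using pol_exp_polar[of "log_polar (\<gamma> t)"] exp_polar_log_polar[OF Hpl]
      by (simp add: pol_def)
    ultimately show ?thesis
      using Hpl by (simp add: polar_integrand_def V_def Hpl_def field_simps)
  qed
  with \<open>finite s\<close> ab cont show ?thesis
    by (intro fundamental_theorem_of_calculus_interior_strong) auto
qed

theorem proposition2:
  fixes f :: "real \<times> real \<Rightarrow> complex" and p1 p2 :: "real \<times> real"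
  assumes "polar_analytic f" and "p1 \<in> Hpl" and "p2 \<in> Hpl"
  shows "(\<exists>I. \<forall>\<gamma> a b. regular_curve \<gamma> a b \<and> \<gamma> a = p1 \<and> \<gamma> b = p2 \<longrightarrow>
              (polar_integrand f \<gamma> has_integral I) {a..b})
       \<and> (\<forall>\<gamma> a b. regular_curve \<gamma> a b \<and> \<gamma> a = \<gamma> b \<longrightarrow>
              (polar_integrand f \<gamma> has_integral 0) {a..b})"
proof -
  obtain G where "\<And>w. (G has_field_derivative f (exp_polar w) * exp w) (at w)"
    using polar_analytic_primitive[OF assms(1)] by blast
  note integral = has_integral_polar_integrand[OF this]
  show ?thesis
  proof
    show "\<exists>I. \<forall>\<gamma> a b. regular_curve \<gamma> a b \<and> \<gamma> a = p1 \<and> \<gamma> b = p2 \<longrightarrow>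
              (polar_integrand f \<gamma> has_integral I) {a..b}"
      using integral by (intro exI[of _ "G (log_polar p2) - G (log_polar p1)"]) blast
    show "\<forall>\<gamma> a b. regular_curve \<gamma> a b \<and> \<gamma> a = \<gamma> b \<longrightarrow>
              (polar_integrand f \<gamma> has_integral 0) {a..b}"
      using integral by force
  qed
qed

end
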